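(* Consider the system $$\dot v=(-\mu_1-p_{11}v^2+p_{12}A^2)v-M_2 s,\quad \dot A=(-\mu_2-p_{21}v^2+p_{22}A^2)A+M_3 s,\quad \dot s=2\alpha(v+M_1 s)s,$$ under the standing assumptions of the context, and fix $\mu_2=\mu_2^0>0$. If $\mu_1<0$ is taken sufficiently close to $0$, then "the solution" satisfies $s(t)=O(|\mu_1|)$ for all $t>0$.
   Context: Standing assumptions: $\alpha>0$, $M_1\in\mathbb R$, $M_2>0$, $M_3>0$, $p_{11},p_{12},p_{21},p_{22}>0$, $p_{12}p_{21}<p_{11}p_{22}$. (The paper's further hypotheses on the underlying PDE impose no condition on this ODE.) For $\mu_1<0$ let $v_{\rm ep2}=\sqrt{-\mu_1/p_{11}}$ and $\widetilde{\mathrm{EP}}_2^\pm=(\pm v_{\rm ep2},0,0)$ in $(v,A,s)$-coordinates; $\widetilde{\mathrm{EP}}_2^+$ has the positive eigenvalue $2\alpha v_{\rm ep2}$, and "the solution" is the trajectory emanating from $\widetilde{\mathrm{EP}}_2^+$ at $t=-\infty$ along this unstable direction into $s>0$. $O(|\mu_1|)$ means bounded by a constant times $|\mu_1|$ as $\mu_1\to0$. *)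

theory Defs
  imports "HOL-Analysis.Analysis"
begin

definition solves_sys ::
  "real \<Rightarrow> real \<Rightarrow> real \<Rightarrow> real \<Rightarrow> real \<Rightarrow> real \<Rightarrow> real \<Rightarrow> real \<Rightarrow> real \<Rightarrow> real
   \<Rightarrow> ereal \<Rightarrow> (real \<Rightarrow> real) \<Rightarrow> (real \<Rightarrow> real) \<Rightarrow> (real \<Rightarrow> real) \<Rightarrow> bool" where
  "solves_sys \<alpha> M1 M2 M3 p11 p12 p21 p22 \<mu>1 \<mu>2 T v A s \<longleftrightarrow>
     (\<forall>t. ereal t < T \<longrightarrow>
        (v has_real_derivative ((- \<mu>1 - p11 * (v t)^2 + p12 * (A t)^2) * v t - M2 * s t)) (at t) \<and>
        (A has_real_derivative ((- \<mu>2 - p21 * (v t)^2 + p22 * (A t)^2) * A t + M3 * s t)) (at t) \<and>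
        (s has_real_derivative (2 * \<alpha> * (v t + M1 * s t) * s t)) (at t))"

definition v_ep2 :: "real \<Rightarrow> real \<Rightarrow> real" where
  "v_ep2 p11 \<mu>1 = sqrt (- \<mu>1 / p11)"

text \<open>"The solution": a solution (on {t. t < T}) emanating from EP2+ = (v_ep2,0,0)
  at t = -infinity into the half-space s > 0.\<close>
definition the_solution ::
  "real \<Rightarrow> real \<Rightarrow> real \<Rightarrow> real \<Rightarrow> real \<Rightarrow> real \<Rightarrow> real \<Rightarrow> real \<Rightarrow> real \<Rightarrow> real
   \<Rightarrow> ereal \<Rightarrow> (real \<Rightarrow> real) \<Rightarrow> (real \<Rightarrow> real) \<Rightarrow> (real \<Rightarrow> real) \<Rightarrow> bool" where
  "the_solution \<alpha> M1 M2 M3 p11 p12 p21 p22 \<mu>1 \<mu>2 T v A s \<longleftrightarrow>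
     solves_sys \<alpha> M1 M2 M3 p11 p12 p21 p22 \<mu>1 \<mu>2 T v A s \<and>
     (v \<longlongrightarrow> v_ep2 p11 \<mu>1) at_bot \<and> (A \<longlongrightarrow> 0) at_bot \<and> (s \<longlongrightarrow> 0) at_bot \<and>
     (\<forall>t. ereal t < T \<longrightarrow> s t > 0)"

end

theory Submission
  imports Defs
begin

(* Write w = sqrt(-mu1/p11), u = v + M1 s and
     G = M2 s + alpha u^2 + p11 w^2 u + k u^3 - 2 alpha w^2.
   The solution stays for all time in the region
     G <= 0,  A^2 <= (D w^2)^2,  u^2 <= 9 w^2,
   and there G <= 0 forces M2 s <= 9/4 alpha w^2 = O(|mu1|).
   It starts strictly inside at t = -infinity, and it cannot reach the boundary:
   on G = 0 the rate of G is w^4 times a continuous function of (w, u/w, A/w^2) whose value at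
   w = 0 is alpha p11 (3U^2 - 2U^4 - 2) < 0, so it is negative for small w by compactness;
   on A^2 = (D w^2)^2 the damping -mu2 A dominates the forcing M3 s; and the face u^2 = 9 w^2
   is never reached first, because G <= 0 and u^2 <= 9 w^2 already give u^2 < 9/4 w^2. *)

lemma barriers_stay_negative:
  fixes \<F> :: "(real \<Rightarrow> real) set" and T :: ereal
  assumes "finite \<F>"
    and cont: "\<And>f t. f \<in> \<F> \<Longrightarrow> ereal t < T \<Longrightarrow> isCont f t"
    and start: "\<forall>\<^sub>F t in at_bot. \<forall>f\<in>\<F>. f t < 0"
    and inward: "\<And>f t. f \<in> \<F> \<Longrightarrow> ereal t < T \<Longrightarrow> \<forall>g\<in>\<F>. g t \<le> 0 \<Longrightarrow> f t = 0 \<Longrightarrow>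
       \<exists>d<0. (f has_real_derivative d) (at t)"
    and "f \<in> \<F>" "ereal t < T"
  shows "f t < 0"
proof (rule ccontr)
  assume "\<not> f t < 0"
  obtain t0 where t0: "\<And>x f. x \<le> t0 \<Longrightarrow> f \<in> \<F> \<Longrightarrow> f x < 0"
    using start unfolding eventually_at_bot_linorder by blast
  have before_T: "ereal x < T" if "x \<le> t" for x
    using \<open>ereal t < T\<close> that by (meson ereal_less_eq(3) order_le_less_trans)
  define a where "a = min t0 t"
  define K where "K = (\<Union>g\<in>\<F>. {x \<in> {a..t}. 0 \<le> g x})"
  have "compact K"
    unfolding K_def
  proof (intro compact_UN \<open>finite \<F>\<close>)
    fix g assume "g \<in> \<F>"
    then have "continuous_on {a..t} g"
      using cont before_T by (intro continuous_at_imp_continuous_on) auto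
    then have "closed {x \<in> {a..t}. 0 \<le> g x}"
      by (rule continuous_on_closed_Collect_le[OF continuous_on_const _ closed_atLeastAtMost])
    then have "compact ({a..t} \<inter> {x \<in> {a..t}. 0 \<le> g x})"
      by (rule compact_Int_closed[OF compact_Icc])
    then show "compact {x \<in> {a..t}. 0 \<le> g x}"
      by (metis Collect_subset Int_absorb1)
  qed
  moreover have "t \<in> K"
    unfolding K_def a_def using \<open>f \<in> \<F>\<close> \<open>\<not> f t < 0\<close> by (intro UN_I[of f]) auto
  ultimately obtain \<tau> where "\<tau> \<in> K" and \<tau>_min: "\<And>x. x \<in> K \<Longrightarrow> \<tau> \<le> x"
    using compact_attains_inf[of K] by auto
  then obtain h where h: "h \<in> \<F>" "0 \<le> h \<tau>" and "\<tau> \<le> t"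
    unfolding K_def by auto
  have neg_before: "g x < 0" if "g \<in> \<F>" "x < \<tau>" for g x
  proof (cases "x \<le> a")
    case True
    then show ?thesis using t0 that by (simp add: a_def)
  next
    case False
    then have "x \<in> {a..t}" using \<open>x < \<tau>\<close> \<open>\<tau> \<le> t\<close> by simp
    moreover have "x \<notin> K" using \<tau>_min \<open>x < \<tau>\<close> by (meson not_le)
    ultimately show ?thesis using \<open>g \<in> \<F>\<close> unfolding K_def by force
  qed
  have nonpos: "\<forall>g\<in>\<F>. g \<tau> \<le> 0"
  proof
    fix g assume "g \<in> \<F>"
    have "(g \<longlongrightarrow> g \<tau>) (at_left \<tau>)"
      using cont[OF \<open>g \<in> \<F>\<close> before_T[OF \<open>\<tau> \<le> t\<close>]] by (simp add: isCont_def filterlim_at_split)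
    moreover have "\<forall>\<^sub>F x in at_left \<tau>. g x \<le> 0"
      unfolding eventually_at_left_field using neg_before[OF \<open>g \<in> \<F>\<close>]
      by (intro exI[of _ "\<tau> - 1"]) (auto intro: less_imp_le)
    ultimately show "g \<tau> \<le> 0"
      by (rule tendsto_upperbound) simp
  qed
  then have "h \<tau> = 0" using h by (meson order_antisym)
  then obtain d where "d < 0" "(h has_real_derivative d) (at \<tau>)"
    using inward[OF \<open>h \<in> \<F>\<close> before_T[OF \<open>\<tau> \<le> t\<close>] nonpos] by blast
  then obtain e where "e > 0" "\<forall>y>0. y < e \<longrightarrow> h \<tau> < h (\<tau> - y)"
    using DERIV_neg_dec_left by blast
  then have "0 < h (\<tau> - e/2)" using \<open>h \<tau> = 0\<close> by simp
  moreover have "h (\<tau> - e/2) < 0" using neg_before \<open>h \<in> \<F>\<close> \<open>e > 0\<close> by simp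
  ultimately show False by simp
qed

lemma eventually_negative_near_slice:
  fixes f :: "real \<times> 'a::metric_space \<Rightarrow> real"
  assumes "compact K" and cont: "continuous_on ({0..1} \<times> K) f" and slice: "\<And>x. x \<in> K \<Longrightarrow> f (0, x) < 0"
  shows "\<forall>\<^sub>F w in at_right 0. \<forall>x\<in>K. f (w, x) < 0"
proof -
  define S where "S = {p \<in> {0..1} \<times> K. 0 \<le> f p}"
  have "compact ({0..1::real} \<times> K)"
    using \<open>compact K\<close> by (simp add: compact_Times)
  moreover have "closed S"
    unfolding S_def using cont calculation
    by (intro continuous_on_closed_Collect_le[OF continuous_on_const]) (auto intro: compact_imp_closed)
  ultimately have "compact S"
    unfolding S_def by (metis Collect_subset Int_absorb1 compact_Int_closed)
  obtain \<eta> where "\<eta> > 0" and \<eta>_le: "\<And>p. p \<in> S \<Longrightarrow> \<eta> \<le> fst p"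
  proof (cases "S = {}")
    case True
    then show ?thesis using that[of 1] by simp
  next
    case False
    then obtain p where "p \<in> S" and p_min: "\<And>q. q \<in> S \<Longrightarrow> fst p \<le> fst q"
      using continuous_attains_inf[OF \<open>compact S\<close> _ continuous_on_fst[OF continuous_on_id]] by auto
    obtain w x where p: "p = (w, x)" and "0 \<le> w" "x \<in> K" "0 \<le> f (w, x)"
      using \<open>p \<in> S\<close> unfolding S_def by auto
    then have "w > 0"
      using slice[of x] by (cases "w = 0") auto
    then show ?thesis
      using that p_min p by force
  qed
  show ?thesis
    unfolding eventually_at_right_field
  proof (intro exI[of _ "min 1 \<eta>"] conjI allI impI ballI)
    fix w x assume "0 < w" "w < min 1 \<eta>" "x \<in> K"
    then have "(w, x) \<notin> S" using \<eta>_le[of "(w, x)"] by auto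
    then show "f (w, x) < 0" using \<open>0 < w\<close> \<open>w < min 1 \<eta>\<close> \<open>x \<in> K\<close> unfolding S_def by auto
  qed (use \<open>\<eta> > 0\<close> in simp)
qed

locale vAs_system =
  fixes \<alpha> M1 M2 M3 p11 p12 p21 p22 \<mu>2 :: real
  assumes \<alpha>_pos: "\<alpha> > 0" and M2_pos: "M2 > 0" and M3_pos: "M3 > 0"
    and p11_pos: "p11 > 0" and p21_nonneg: "p21 \<ge> 0" and \<mu>2_pos: "\<mu>2 > 0"
begin

text \<open>The cubic term k u^3 of G is tuned so that the M1-dependent terms cancel in the
  leading-order rate of G (lemma G_rate_scaled_zero).\<close>

definition k :: real where
  "k = 4 * \<alpha>^2 * M1 / (3 * M2)"

text \<open>D makes the forcing M3 s at most \<mu>2 D w^2 / 4 wherever M2 s \<le> 9/4 \<alpha> w^2.\<close>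

definition D :: real where
  "D = 9 * \<alpha> * M3 / (M2 * \<mu>2)"

lemma D_pos: "D > 0"
  using \<alpha>_pos M2_pos M3_pos \<mu>2_pos by (simp add: D_def)

definition G :: "real \<Rightarrow> real \<Rightarrow> real \<Rightarrow> real" where
  "G w v s = M2 * s + \<alpha> * (v + M1 * s)^2 + p11 * w^2 * (v + M1 * s) + k * (v + M1 * s)^3 - 2 * \<alpha> * w^2"

definition G_rate :: "real \<Rightarrow> real \<Rightarrow> real \<Rightarrow> real \<Rightarrow> real" where
  "G_rate w v A s =
     M2 * (2 * \<alpha> * (v + M1 * s) * s)
     + (2 * \<alpha> * (v + M1 * s) + p11 * w^2 + 3 * k * (v + M1 * s)^2)
       * ((p11 * w^2 - p11 * v^2 + p12 * A^2) * v - M2 * s + 2 * \<alpha> * M1 * (v + M1 * s) * s)"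

text \<open>On the level set G w v s = 0, with v + M1 s = w U and A = w^2 B, one has
  s = w^2 level_s w U and G_rate w v A s = w^4 G_rate_scaled w U B (lemma G_rate_rescale).\<close>

definition level_s :: "real \<Rightarrow> real \<Rightarrow> real" where
  "level_s w U = (2 * \<alpha> - \<alpha> * U^2 - w * (p11 * U + k * U^3)) / M2"

definition G_rate_scaled :: "real \<Rightarrow> real \<Rightarrow> real \<Rightarrow> real" where
  "G_rate_scaled w U B =
     (let \<sigma> = level_s w U; V = U - M1 * w * \<sigma> in
      - (p11 + 3 * k * U^2) * M2 * \<sigma>
      + (2 * \<alpha> * U + p11 * w + 3 * k * w * U^2) * ((p11 - p11 * V^2 + p12 * w^2 * B^2) * V + 2 * \<alpha> * M1 * U * \<sigma>))"

lemma G_rate_scaled_zero: "G_rate_scaled 0 U B = \<alpha> * p11 * (3 * U^2 - 2 * U^4 - 2)"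
proof -
  define \<sigma> where "\<sigma> = level_s 0 U"
  have \<sigma>: "M2 * \<sigma> = 2 * \<alpha> - \<alpha> * U^2" and k: "3 * k * M2 = 4 * \<alpha>^2 * M1"
    using M2_pos by (simp_all add: \<sigma>_def level_s_def k_def)
  have "G_rate_scaled 0 U B
      = - p11 * (M2 * \<sigma>) - U^2 * (3 * k * M2) * \<sigma> + 2 * \<alpha> * U * ((p11 - p11 * U^2) * U + 2 * \<alpha> * M1 * U * \<sigma>)"
    unfolding G_rate_scaled_def Let_def \<sigma>_def by (simp add: algebra_simps)
  also have "\<dots> = \<alpha> * p11 * (3 * U^2 - 2 * U^4 - 2)"
    unfolding \<sigma> k by algebra
  finally show ?thesis .
qed

lemma G_rate_scaled_zero_neg: "G_rate_scaled 0 U B < 0"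
proof -
  have "3 * U^2 - 2 * U^4 - 2 = - 2 * (U^2 - 3/4)^2 - 7/8"
    by algebra
  also have "\<dots> < 0"
    using zero_le_power2[of "U^2 - 3/4"] by linarith
  finally show ?thesis
    using \<alpha>_pos p11_pos by (simp add: G_rate_scaled_zero mult_pos_neg)
qed

lemma G_rate_rescale:
  assumes "w \<noteq> 0" and "G w v s = 0"
  shows "G_rate w v A s = w^4 * G_rate_scaled w ((v + M1 * s) / w) (A / w^2)"
proof -
  define U where "U = (v + M1 * s) / w"
  define B where "B = A / w^2"
  have u: "v + M1 * s = w * U" and A: "A = w^2 * B"
    using assms(1) by (simp_all add: U_def B_def)
  have "M2 * s = w^2 * (2 * \<alpha> - \<alpha> * U^2 - w * (p11 * U + k * U^3))"
    using assms(2) unfolding G_def u by algebra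
  then have s: "s = w^2 * level_s w U"
    using M2_pos by (simp add: level_s_def field_simps)
  have v: "v = w * U - M1 * (w^2 * level_s w U)"
    using u s by algebra
  show ?thesis
    unfolding G_rate_def G_rate_scaled_def Let_def U_def[symmetric] B_def[symmetric]
    unfolding v s A by algebra
qed

lemma eventually_G_rate_scaled_neg:
  "\<forall>\<^sub>F w in at_right 0. \<forall>U B. \<bar>U\<bar> \<le> 2 \<longrightarrow> \<bar>B\<bar> \<le> D \<longrightarrow> G_rate_scaled w U B < 0"
proof -
  have "\<forall>\<^sub>F w in at_right 0. \<forall>x\<in>{-2..2} \<times> {-D..D}. (\<lambda>(w, U, B). G_rate_scaled w U B) (w, x) < 0"
  proof (rule eventually_negative_near_slice)
    show "continuous_on ({0..1} \<times> {-2..2} \<times> {-D..D}) (\<lambda>(w, U, B). G_rate_scaled w U B)"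
      unfolding G_rate_scaled_def level_s_def Let_def case_prod_unfold
      using M2_pos by (auto intro!: continuous_intros)
  qed (simp_all add: compact_Times G_rate_scaled_zero_neg case_prod_beta)
  then show ?thesis
    by eventually_elim (auto simp: abs_le_iff)
qed

lemma G_rate_neg_on_level_set:
  "\<forall>\<^sub>F w in at_right 0. \<forall>v A s. G w v s = 0 \<longrightarrow> \<bar>v + M1 * s\<bar> \<le> 2 * w \<longrightarrow> \<bar>A\<bar> \<le> D * w^2 \<longrightarrow>
     G_rate w v A s < 0"
  using eventually_G_rate_scaled_neg eventually_at_right_less
proof eventually_elim
  case (elim w)
  show ?case
  proof (intro allI impI)
    fix v A s
    assume "G w v s = 0" "\<bar>v + M1 * s\<bar> \<le> 2 * w" "\<bar>A\<bar> \<le> D * w^2"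
    with \<open>0 < w\<close> have "\<bar>(v + M1 * s) / w\<bar> \<le> 2" "\<bar>A / w^2\<bar> \<le> D"
      by (simp_all add: divide_le_eq)
    with elim have "G_rate_scaled w ((v + M1 * s) / w) (A / w^2) < 0"
      by blast
    then show "G_rate w v A s < 0"
      using \<open>0 < w\<close> \<open>G w v s = 0\<close> by (simp add: G_rate_rescale mult_pos_neg)
  qed
qed

lemma G_nonpos_bounds:
  assumes "w > 0" and small: "(3 * p11 + 27 * \<bar>k\<bar>) * w \<le> \<alpha> / 4"
    and "\<bar>v + M1 * s\<bar> \<le> 3 * w" "s > 0" "G w v s \<le> 0"
  shows "(v + M1 * s)^2 < 9/4 * w^2" "M2 * s \<le> 9/4 * \<alpha> * w^2"
proof -
  define u where "u = v + M1 * s"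
  have "\<bar>u\<bar> \<le> 3 * w"
    using assms(3) by (simp add: u_def)
  then have "\<bar>u\<bar>^3 \<le> 27 * w^3"
    using power_mono[of "\<bar>u\<bar>" "3 * w" 3] by simp
  then have "\<bar>k\<bar> * \<bar>u\<bar>^3 \<le> \<bar>k\<bar> * (27 * w^3)"
    by (intro mult_left_mono) auto
  then have "\<bar>k * u^3\<bar> \<le> 27 * \<bar>k\<bar> * w^3"
    by (simp add: abs_mult power_abs)
  moreover have "\<bar>p11 * w^2 * u\<bar> \<le> 3 * p11 * w^3"
    using \<open>\<bar>u\<bar> \<le> 3 * w\<close> p11_pos \<open>w > 0\<close> by (simp add: abs_mult power3_eq_cube power2_eq_square)
  moreover have "(3 * p11 + 27 * \<bar>k\<bar>) * w * w^2 \<le> \<alpha> / 4 * w^2"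
    using small by (intro mult_right_mono) auto
  then have "3 * p11 * w^3 + 27 * \<bar>k\<bar> * w^3 \<le> \<alpha> / 4 * w^2"
    by (simp add: power3_eq_cube power2_eq_square algebra_simps)
  moreover have "G w v s = M2 * s + \<alpha> * u^2 + p11 * w^2 * u + k * u^3 - 2 * \<alpha> * w^2"
    by (simp add: G_def u_def)
  ultimately have "M2 * s + \<alpha> * u^2 \<le> 9/4 * \<alpha> * w^2"
    using \<open>G w v s \<le> 0\<close> by (simp only: abs_le_iff) linarith
  moreover have "M2 * s > 0" "\<alpha> * u^2 \<ge> 0"
    using M2_pos \<alpha>_pos \<open>s > 0\<close> by simp_all
  ultimately have "\<alpha> * u^2 < \<alpha> * (9/4 * w^2)" "M2 * s \<le> 9/4 * \<alpha> * w^2"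
    by linarith+
  then show "(v + M1 * s)^2 < 9/4 * w^2" "M2 * s \<le> 9/4 * \<alpha> * w^2"
    using \<alpha>_pos by (simp_all add: u_def)
qed

lemma A_rate_neg_on_boundary:
  assumes "w \<noteq> 0" "\<bar>A\<bar> = D * w^2" "s > 0" "M2 * s \<le> 9/4 * \<alpha> * w^2" "p22 * (D * w^2)^2 \<le> \<mu>2 / 2"
  shows "2 * A * ((- \<mu>2 - p21 * v^2 + p22 * A^2) * A + M3 * s) < 0"
proof -
  define c where "c = D * w^2"
  have "c > 0"
    using assms(1) D_pos by (simp add: c_def)
  have A2: "A^2 = c^2"
    using assms(2) by (metis c_def power2_abs)
  have "M3 * s \<le> M3 * (9/4 * \<alpha> * w^2 / M2)"
    using assms(4) M2_pos M3_pos by (simp add: field_simps)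
  also have "\<dots> = \<mu>2 * c / 4"
    using M2_pos \<mu>2_pos by (simp add: c_def D_def field_simps)
  finally have "c * (M3 * s) \<le> c * (\<mu>2 * c / 4)"
    using \<open>c > 0\<close> by (intro mult_left_mono) auto
  moreover have "M3 * (A * s) \<le> M3 * (c * s)"
    using abs_ge_self[of A] assms(2,3) M3_pos by (intro mult_left_mono mult_right_mono) (auto simp: c_def)
  moreover have "(- \<mu>2 + p22 * A^2) * A^2 \<le> - \<mu>2 / 2 * A^2"
    using assms(5) A2 by (intro mult_right_mono) (auto simp: c_def)
  moreover have "p21 * v^2 * A^2 \<ge> 0"
    using p21_nonneg by simp
  moreover have "\<mu>2 * c^2 > 0"
    using \<open>c > 0\<close> \<mu>2_pos by simp
  moreover have "2 * A * ((- \<mu>2 - p21 * v^2 + p22 * A^2) * A + M3 * s)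
      = 2 * ((- \<mu>2 + p22 * A^2) * A^2) - 2 * (p21 * v^2 * A^2) + 2 * (M3 * (A * s))"
    by (simp add: algebra_simps power2_eq_square)
  ultimately show ?thesis
    unfolding A2 by (simp add: power2_eq_square algebra_simps)
qed

lemma G_along_solution:
  assumes "solves_sys \<alpha> M1 M2 M3 p11 p12 p21 p22 (- (p11 * w^2)) \<mu>2 T v A s" "ereal t < T"
  shows "((\<lambda>t. G w (v t) (s t)) has_real_derivative G_rate w (v t) (A t) (s t)) (at t)"
proof -
  have dv: "(v has_real_derivative (p11 * w^2 - p11 * (v t)^2 + p12 * (A t)^2) * v t - M2 * s t) (at t)"
    and ds: "(s has_real_derivative 2 * \<alpha> * (v t + M1 * s t) * s t) (at t)"
    using assms unfolding solves_sys_def by auto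
  show ?thesis
    unfolding G_def
    by (rule derivative_eq_intros dv ds refl)+ (simp add: G_rate_def power2_eq_square algebra_simps)
qed

lemma A_square_along_solution:
  assumes "solves_sys \<alpha> M1 M2 M3 p11 p12 p21 p22 \<mu>1 \<mu>2 T v A s" "ereal t < T"
  shows "((\<lambda>t. (A t)^2 - c) has_real_derivative
           2 * A t * ((- \<mu>2 - p21 * (v t)^2 + p22 * (A t)^2) * A t + M3 * s t)) (at t)"
proof -
  have dA: "(A has_real_derivative (- \<mu>2 - p21 * (v t)^2 + p22 * (A t)^2) * A t + M3 * s t) (at t)"
    using assms unfolding solves_sys_def by auto
  show ?thesis
    by (rule derivative_eq_intros dA refl)+ (simp add: power2_eq_square algebra_simps)
qed

lemma G_at_rest_neg:
  assumes "w > 0" "(3 * p11 + 27 * \<bar>k\<bar>) * w \<le> \<alpha> / 4"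
  shows "G w w 0 < 0"
proof -
  have "(p11 + k) * w \<le> \<alpha> / 4"
    using assms p11_pos by (smt (verit) abs_ge_self mult_right_mono)
  then have "(p11 + k) * w * w^2 < \<alpha> * w^2"
    using assms(1) \<alpha>_pos by (intro mult_strict_right_mono) auto
  then show ?thesis
    by (simp add: G_def power3_eq_cube power2_eq_square algebra_simps)
qed

definition small_scale :: "real \<Rightarrow> bool" where
  "small_scale w \<longleftrightarrow> w > 0 \<and> (3 * p11 + 27 * \<bar>k\<bar>) * w \<le> \<alpha> / 4 \<and> p22 * (D * w^2)^2 \<le> \<mu>2 / 2 \<and>
     (\<forall>v A s. G w v s = 0 \<longrightarrow> \<bar>v + M1 * s\<bar> \<le> 2 * w \<longrightarrow> \<bar>A\<bar> \<le> D * w^2 \<longrightarrow> G_rate w v A s < 0)"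

lemma eventually_small_scale: "\<forall>\<^sub>F w in at_right 0. small_scale w"
proof -
  have "((\<lambda>w. (3 * p11 + 27 * \<bar>k\<bar>) * w) \<longlongrightarrow> 0) (at_right 0)"
    by (intro tendsto_eq_intros) auto
  then have "\<forall>\<^sub>F w in at_right 0. (3 * p11 + 27 * \<bar>k\<bar>) * w < \<alpha> / 4"
    using \<alpha>_pos by (intro order_tendstoD(2)) auto
  moreover have "((\<lambda>w. p22 * (D * w^2)^2) \<longlongrightarrow> 0) (at_right 0)"
    by (intro tendsto_eq_intros) auto
  then have "\<forall>\<^sub>F w in at_right 0. p22 * (D * w^2)^2 < \<mu>2 / 2"
    using \<mu>2_pos by (intro order_tendstoD(2)) auto
  ultimately show ?thesis
    using G_rate_neg_on_level_set eventually_at_right_less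
    by eventually_elim (simp add: small_scale_def less_imp_le)
qed

lemma small_scale_region:
  assumes "small_scale w" "s > 0" "G w v s \<le> 0" "A^2 \<le> (D * w^2)^2" "(v + M1 * s)^2 \<le> 9 * w^2"
  shows "M2 * s \<le> 9/4 * \<alpha> * w^2"
    and "(v + M1 * s)^2 < 9 * w^2"
    and "G w v s = 0 \<Longrightarrow> G_rate w v A s < 0"
    and "A^2 = (D * w^2)^2 \<Longrightarrow> 2 * A * ((- \<mu>2 - p21 * v^2 + p22 * A^2) * A + M3 * s) < 0"
proof -
  have "w > 0" and small: "(3 * p11 + 27 * \<bar>k\<bar>) * w \<le> \<alpha> / 4" "p22 * (D * w^2)^2 \<le> \<mu>2 / 2"
    using \<open>small_scale w\<close> by (simp_all add: small_scale_def)
  have "\<bar>v + M1 * s\<bar> \<le> \<bar>3 * w\<bar>"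
    using assms(5) by (simp add: abs_le_square_iff power_mult_distrib)
  then have u: "(v + M1 * s)^2 < 9/4 * w^2" and s: "M2 * s \<le> 9/4 * \<alpha> * w^2"
    using G_nonpos_bounds[OF \<open>w > 0\<close> small(1) _ \<open>s > 0\<close> \<open>G w v s \<le> 0\<close>] \<open>w > 0\<close> by simp_all
  then show "M2 * s \<le> 9/4 * \<alpha> * w^2" "(v + M1 * s)^2 < 9 * w^2"
    using zero_le_power2[of w] by linarith+
  have "\<bar>A\<bar> \<le> D * w^2"
    using assms(4) D_pos by (simp add: abs_le_square_iff[symmetric])
  moreover have "(v + M1 * s)^2 \<le> 4 * w^2"
    using u zero_le_power2[of w] by linarith
  then have "\<bar>v + M1 * s\<bar> \<le> \<bar>2 * w\<bar>"
    by (simp add: abs_le_square_iff power_mult_distrib)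
  then have "\<bar>v + M1 * s\<bar> \<le> 2 * w"
    using \<open>w > 0\<close> by simp
  ultimately show "G w v s = 0 \<Longrightarrow> G_rate w v A s < 0"
    using \<open>small_scale w\<close> by (simp add: small_scale_def)
  assume "A^2 = (D * w^2)^2"
  then have "\<bar>A\<bar> = D * w^2"
    using D_pos by (auto simp: power2_eq_iff)
  then show "2 * A * ((- \<mu>2 - p21 * v^2 + p22 * A^2) * A + M3 * s) < 0"
    using \<open>w > 0\<close> by (intro A_rate_neg_on_boundary[OF _ _ \<open>s > 0\<close> s small(2)]) auto
qed

lemma solution_starts_inside:
  assumes "small_scale w" "the_solution \<alpha> M1 M2 M3 p11 p12 p21 p22 (- (p11 * w^2)) \<mu>2 T v A s"
  shows "\<forall>\<^sub>F t in at_bot. G w (v t) (s t) < 0 \<and> (A t)^2 - (D * w^2)^2 < 0 \<and> (v t + M1 * s t)^2 - 9 * w^2 < 0"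
proof -
  have "w > 0" and small: "(3 * p11 + 27 * \<bar>k\<bar>) * w \<le> \<alpha> / 4"
    using \<open>small_scale w\<close> by (simp_all add: small_scale_def)
  have lim_v: "(v \<longlongrightarrow> w) at_bot" and lim_A: "(A \<longlongrightarrow> 0) at_bot" and lim_s: "(s \<longlongrightarrow> 0) at_bot"
    using assms(2) \<open>w > 0\<close> p11_pos unfolding the_solution_def v_ep2_def by auto
  have "((\<lambda>t. G w (v t) (s t)) \<longlongrightarrow> G w w 0) at_bot"
    unfolding G_def by (intro tendsto_intros lim_v lim_s)
  then have "\<forall>\<^sub>F t in at_bot. G w (v t) (s t) < 0"
    using G_at_rest_neg[OF \<open>w > 0\<close> small] by (rule order_tendstoD(2))
  moreover have "((\<lambda>t. (A t)^2 - (D * w^2)^2) \<longlongrightarrow> 0^2 - (D * w^2)^2) at_bot"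
    by (intro tendsto_intros lim_A)
  then have "\<forall>\<^sub>F t in at_bot. (A t)^2 - (D * w^2)^2 < 0"
    by (rule order_tendstoD(2)) (use \<open>w > 0\<close> D_pos in simp)
  moreover have "((\<lambda>t. (v t + M1 * s t)^2 - 9 * w^2) \<longlongrightarrow> (w + M1 * 0)^2 - 9 * w^2) at_bot"
    by (intro tendsto_intros lim_v lim_s)
  then have "\<forall>\<^sub>F t in at_bot. (v t + M1 * s t)^2 - 9 * w^2 < 0"
    by (rule order_tendstoD(2)) (use \<open>w > 0\<close> in simp)
  ultimately show ?thesis
    by eventually_elim simp
qed

lemma solution_trapped:
  assumes "small_scale w" and sol: "the_solution \<alpha> M1 M2 M3 p11 p12 p21 p22 (- (p11 * w^2)) \<mu>2 T v A s"
    and "ereal t < T"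
  shows "M2 * s t \<le> 9/4 * \<alpha> * w^2"
proof -
  have sys: "solves_sys \<alpha> M1 M2 M3 p11 p12 p21 p22 (- (p11 * w^2)) \<mu>2 T v A s"
    and s_pos: "\<And>t. ereal t < T \<Longrightarrow> s t > 0"
    using sol unfolding the_solution_def by auto
  define g where "g = (\<lambda>t. G w (v t) (s t))"
  define h where "h = (\<lambda>t. (A t)^2 - (D * w^2)^2)"
  define q where "q = (\<lambda>t. (v t + M1 * s t)^2 - 9 * w^2)"
  have trapped: "f t < 0" if "f \<in> {g, h, q}" "ereal t < T" for f t
  proof (rule barriers_stay_negative[of "{g, h, q}" T, OF _ _ _ _ that])
    show "finite {g, h, q}"
      by simp
  next
    fix f t assume "f \<in> {g, h, q}" "ereal t < T"
    then have "isCont v t" "isCont A t" "isCont s t"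
      using sys unfolding solves_sys_def by (blast intro: DERIV_isCont)+
    then show "isCont f t"
      using \<open>f \<in> {g, h, q}\<close> unfolding g_def h_def q_def G_def by (auto intro!: continuous_intros)
  next
    show "\<forall>\<^sub>F t in at_bot. \<forall>f\<in>{g, h, q}. f t < 0"
      using solution_starts_inside[OF \<open>small_scale w\<close> sol] by (simp add: g_def h_def q_def)
  next
    fix f t assume f: "f \<in> {g, h, q}" and "ereal t < T" and "\<forall>f'\<in>{g, h, q}. f' t \<le> 0" and "f t = 0"
    then have inside: "s t > 0" "G w (v t) (s t) \<le> 0" "(A t)^2 \<le> (D * w^2)^2" "(v t + M1 * s t)^2 \<le> 9 * w^2"
      using s_pos by (simp_all add: g_def h_def q_def)
    note faces = small_scale_region[OF \<open>small_scale w\<close> inside]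
    have "f \<noteq> q"
      using faces(2) \<open>f t = 0\<close> by (auto simp: q_def)
    then consider "f = g" | "f = h"
      using f by auto
    then show "\<exists>d<0. (f has_real_derivative d) (at t)"
    proof cases
      case 1
      then show ?thesis
        using faces(3) G_along_solution[OF sys \<open>ereal t < T\<close>] \<open>f t = 0\<close> by (auto simp: g_def)
    next
      case 2
      then have "(A t)^2 = (D * w^2)^2"
        using \<open>f t = 0\<close> by (simp add: h_def)
      then show ?thesis
        using faces(4) A_square_along_solution[OF sys \<open>ereal t < T\<close>] 2 unfolding h_def by blast
    qed
  qed
  have "g t < 0" "h t < 0" "q t < 0"
    using trapped \<open>ereal t < T\<close> by simp_all
  then have "s t > 0" "G w (v t) (s t) \<le> 0" "(A t)^2 \<le> (D * w^2)^2" "(v t + M1 * s t)^2 \<le> 9 * w^2"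
    using s_pos \<open>ereal t < T\<close> by (simp_all add: g_def h_def q_def)
  then show ?thesis
    by (rule small_scale_region(1)[OF \<open>small_scale w\<close>])
qed

end

theorem lemma3:
  fixes \<alpha> M1 M2 M3 p11 p12 p21 p22 \<mu>2 :: real
  assumes "\<alpha> > 0" "M2 > 0" "M3 > 0"
    and "p11 > 0" "p12 > 0" "p21 > 0" "p22 > 0" "p12 * p21 < p11 * p22"
    and "\<mu>2 > 0"
  shows "\<exists>\<delta>>0. \<exists>C. \<forall>\<mu>1 T v A s.
           - \<delta> < \<mu>1 \<and> \<mu>1 < 0 \<and>
           the_solution \<alpha> M1 M2 M3 p11 p12 p21 p22 \<mu>1 \<mu>2 T v A s \<longrightarrow>
           (\<forall>t>0. ereal t < T \<longrightarrow> \<bar>s t\<bar> \<le> C * \<bar>\<mu>1\<bar>)"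
proof -
  interpret vAs_system \<alpha> M1 M2 M3 p11 p12 p21 p22 \<mu>2
    using assms by unfold_locales auto
  obtain w0 where "w0 > 0" and small: "\<And>w. 0 < w \<Longrightarrow> w < w0 \<Longrightarrow> small_scale w"
    using eventually_small_scale unfolding eventually_at_right_field by blast
  show ?thesis
  proof (rule exI[of _ "p11 * w0^2"], intro conjI exI[of _ "9/4 * \<alpha> / (p11 * M2)"] allI impI)
    show "p11 * w0^2 > 0"
      using \<open>p11 > 0\<close> \<open>w0 > 0\<close> by simp
    fix \<mu>1 T v A s t
    assume sol: "- (p11 * w0^2) < \<mu>1 \<and> \<mu>1 < 0 \<and> the_solution \<alpha> M1 M2 M3 p11 p12 p21 p22 \<mu>1 \<mu>2 T v A s"
      and "0 < t" "ereal t < T"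
    define w where "w = sqrt (- \<mu>1 / p11)"
    have "w > 0" and \<mu>1: "\<mu>1 = - (p11 * w^2)"
      using sol \<open>p11 > 0\<close> by (simp_all add: w_def field_simps)
    have "w^2 < w0^2"
      using sol \<open>p11 > 0\<close> by (simp add: \<mu>1)
    then have "w < w0"
      using \<open>w0 > 0\<close> by (simp add: power_less_imp_less_base)
    moreover have "the_solution \<alpha> M1 M2 M3 p11 p12 p21 p22 (- (p11 * w^2)) \<mu>2 T v A s"
      using sol by (simp add: \<mu>1)
    ultimately have "M2 * s t \<le> 9/4 * \<alpha> * w^2"
      using small[OF \<open>w > 0\<close>] \<open>ereal t < T\<close> by (blast intro: solution_trapped)
    moreover have "s t > 0"
      using sol \<open>ereal t < T\<close> unfolding the_solution_def by blast
    ultimately show "\<bar>s t\<bar> \<le> 9/4 * \<alpha> / (p11 * M2) * \<bar>\<mu>1\<bar>"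
      using \<open>M2 > 0\<close> \<open>p11 > 0\<close> by (simp add: \<mu>1 field_simps)
  qed
qed

end
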